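(* Let $T>K$ be positive integers. Consider the linear model $\mathbf{y}=\mathbf{X}\boldsymbol{\beta}+\mathbf{u}$, where $\mathbf{X}$ is a known non-stochastic real $(T\times K)$ matrix (possibly of rank less than $K$), $\boldsymbol{\beta}\in\mathbb{R}^K$ is unknown and satisfies the linear restrictions $\mathbf{R}\boldsymbol{\beta}=\mathbf{r}$ with known $\mathbf{R}\in\mathbb{R}^{q\times K}$, $\mathbf{r}\in\mathbb{R}^q$, $E(\mathbf{u})=\mathbf{0}$ and $E(\mathbf{u}\mathbf{u}')=\sigma^2\boldsymbol{\Omega}$, where $\sigma^2>0$ is an unknown scalar and $\boldsymbol{\Omega}$ is a known symmetric nonnegative definite $(T\times T)$ matrix with $\mathrm{tr}(\boldsymbol{\Omega})=T$ and rank $M$ (possibly $M<T$). Write $\boldsymbol{\Omega}=\mathbf{F}\boldsymbol{\Lambda}\mathbf{F}'$, where $\mathbf{F}$ is a $(T\times M)$ matrix with orthonormal columns (eigenvectors of $\boldsymbol{\Omega}$ for its positive eigenvalues) and $\boldsymbol{\Lambda}$ is the $(M\times M)$ diagonal matrix of the positive eigenvalues, so that $\boldsymbol{\Omega}^+=\mathbf{F}\boldsymbol{\Lambda}^{-1}\mathbf{F}'$ is the Moore–Penrose inverse of $\boldsymbol{\Omega}$. Let $\mathbf{A}$ be a $(T\times(T-M))$ matrix with orthonormal columns satisfying $\boldsymbol{\Omega}\mathbf{A}=\mathbf{0}$, and let $\mathbf{g}=\mathbf{A}'\mathbf{X}\boldsymbol{\beta}$ (so that $\mathbf{A}'\mathbf{y}=\mathbf{g}$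 with probability one). Define \[ \mathbf{H}=\begin{pmatrix}\mathbf{R}\\ \mathbf{A}'\mathbf{X}\end{pmatrix},\qquad \mathbf{h}=\begin{pmatrix}\mathbf{r}\\ \mathbf{g}\end{pmatrix},\qquad \mathbf{C}_+=\mathbf{X}'\boldsymbol{\Omega}^+\mathbf{X}, \] let $\mathbf{N}$ be a $(K\times(K-\mathrm{rk}(\mathbf{H})))$ matrix whose columns form an orthonormal basis of the null space of $\mathbf{H}$, and let $\mathbf{S}=\mathbf{N}'\mathbf{C}_+\mathbf{N}$. Assume (i) $\mathrm{rk}(\mathbf{R})=\mathrm{rk}(\mathbf{R},\mathbf{r})$; (ii) the stacked matrix $\begin{pmatrix}\mathbf{R}\\ \mathbf{X}\end{pmatrix}$ has full column rank $K$; (iii) $\mathrm{rk}(\mathbf{H})=\mathrm{rk}(\mathbf{H},\mathbf{h})$. Let $\boldsymbol{\beta}^*\in\mathbb{R}^K$ be an arbitrary vector with $\mathbf{H}\boldsymbol{\beta}^*=\mathbf{h}$. Then $\mathbf{S}$ is invertible and the linear system in $\mathbf{b}\in\mathbb{R}^K$ \[ \mathbf{H}\mathbf{b}=\mathbf{h},\qquad \mathbf{N}'\mathbf{C}_+\mathbf{b}=\mathbf{N}'\mathbf{X}'\boldsymbol{\Omega}^+\mathbf{y} \] has the unique solution \[ \hat{\boldsymbol{\beta}}=\mathbf{N}\mathbf{S}^{-1}\mathbf{N}'\mathbf{X}'\boldsymbol{\Omega}^+\mathbf{y}+(\mathbf{I}_K-\mathbf{N}\mathbf{S}^{-1}\mathbf{N}'\mathbf{C}_+)\boldsymbol{\beta}^*,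 \] and, regarding $\hat{\boldsymbol{\beta}}$ as a random vector through $\mathbf{y}$, $E(\hat{\boldsymbol{\beta}})=\boldsymbol{\beta}$ and $\mathrm{Var}(\hat{\boldsymbol{\beta}})=\sigma^2\mathbf{N}\mathbf{S}^{-1}\mathbf{N}'$.
   Context: $\mathrm{rk}$ denotes matrix rank, $(\mathbf{B},\mathbf{b})$ the matrix obtained by appending the column(s) $\mathbf{b}$ to $\mathbf{B}$, and a stacked matrix $\begin{pmatrix}\mathbf{B}_1\\ \mathbf{B}_2\end{pmatrix}$ is formed by placing the rows of $\mathbf{B}_2$ below those of $\mathbf{B}_1$. The restrictions $\mathbf{H}\boldsymbol{\beta}=\mathbf{h}$ combine the explicit restrictions $\mathbf{R}\boldsymbol{\beta}=\mathbf{r}$ with the implicit restrictions $\mathbf{A}'\mathbf{X}\boldsymbol{\beta}=\mathbf{g}$ induced by the singularity of $\boldsymbol{\Omega}$. $\mathrm{Var}$ denotes the covariance matrix. *)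

theory Defs
  imports "HOL-Probability.Probability" "Jordan_Normal_Form.DL_Rank"
begin

definition rk :: "real mat \<Rightarrow> nat" where
  "rk A = vec_space.rank (dim_row A) A"

definition mtrace :: "real mat \<Rightarrow> real" where
  "mtrace A = (\<Sum>i<dim_row A. A $$ (i, i))"

definition append_col :: "real mat \<Rightarrow> real vec \<Rightarrow> real mat" where
  "append_col B b = mat (dim_row B) (dim_col B + 1)
     (\<lambda>(i, j). if j < dim_col B then B $$ (i, j) else b $ i)"

definition sym_psd :: "real mat \<Rightarrow> bool" where
  "sym_psd A \<longleftrightarrow> A\<^sup>T = A \<and> (\<forall>v \<in> carrier_vec (dim_row A). 0 \<le> v \<bullet> (A *\<^sub>v v))"

definition diag_inv :: "real mat \<Rightarrow> real mat" where
  "diag_inv L = mat (dim_row L) (dim_row L) (\<lambda>(i, j). if i = j then 1 / L $$ (i, i) else 0)"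

text \<open>Moore-Penrose inverse F Lambda^-1 F' built from the spectral factors of Omega.\<close>
definition eig_pinv :: "real mat \<Rightarrow> real mat \<Rightarrow> real mat" where
  "eig_pinv F L = F * diag_inv L * F\<^sup>T"

definition vexp :: "'w measure \<Rightarrow> ('w \<Rightarrow> real vec) \<Rightarrow> nat \<Rightarrow> real vec" where
  "vexp P Z n = vec n (\<lambda>i. integral\<^sup>L P (\<lambda>\<omega>. Z \<omega> $ i))"

definition vsecond :: "'w measure \<Rightarrow> ('w \<Rightarrow> real vec) \<Rightarrow> nat \<Rightarrow> real mat" where
  "vsecond P Z n = mat n n (\<lambda>(i, j). integral\<^sup>L P (\<lambda>\<omega>. Z \<omega> $ i * Z \<omega> $ j))"

definition vcov :: "'w measure \<Rightarrow> ('w \<Rightarrow> real vec) \<Rightarrow> nat \<Rightarrow> real mat" where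
  "vcov P Z n = mat n n (\<lambda>(i, j). integral\<^sup>L P
      (\<lambda>\<omega>. (Z \<omega> $ i - vexp P Z n $ i) * (Z \<omega> $ j - vexp P Z n $ j)))"

end

theory Submission
  imports Defs
begin

text \<open>Every solution of H b = h has the form \<beta> + N c, since \<beta> itself is one;
  substituting into the second equation leaves S c = N' X' \<Omega>+ (y - X \<beta>), where \<Omega>+ = F \<Lambda>^-1 F'.
  The matrix S = N' X' \<Omega>+ X N is positive definite: c' S c = w' \<Lambda>^-1 w with w = F' X N c, so
  c' S c = 0 forces F' X N c = 0. From H N = 0 we also get R N c = 0 and A' X N c = 0, and as the
  columns of F and A together form an orthonormal basis of the whole space, X N c = 0. Full column
  rank of (R; X) now gives N c = 0, hence c = N' N c = 0. Consequently the estimator equals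
  \<beta> + G u with G = N S^-1 N' X' \<Omega>+, so its mean is \<beta> and its covariance is
  \<sigma>2 G \<Omega> G' = \<sigma>2 N S^-1 N', because \<Omega>+ \<Omega> \<Omega>+ = \<Omega>+.\<close>

section \<open>Matrix algebra\<close>

text \<open>Versions of associativity and of the transposition law whose side conditions are
  dimension equations: as conditional rewrite rules they let the simplifier normalise matrix
  products without guessing the inner dimensions of carrier statements.\<close>

lemma assoc_mult_mat_dims:
  fixes A B C :: "'a :: semiring_0 mat"
  shows "dim_col A = dim_row B \<Longrightarrow> dim_col B = dim_row C \<Longrightarrow> A * B * C = A * (B * C)"
  by (rule assoc_mult_mat[of A "dim_row A" "dim_col A" B "dim_col B" C "dim_col C"]) auto

lemma assoc_mult_mat_vec_dims:
  fixes A B :: "'a :: semiring_0 mat"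
  shows "dim_col A = dim_row B \<Longrightarrow> dim_col B = dim_vec v \<Longrightarrow> A * B *\<^sub>v v = A *\<^sub>v (B *\<^sub>v v)"
  by (rule assoc_mult_mat_vec[of A "dim_row A" "dim_col A" B "dim_col B"]) auto

lemma transpose_mult_dims:
  fixes A B :: "'a :: comm_semiring_0 mat"
  shows "dim_col A = dim_row B \<Longrightarrow> (A * B)\<^sup>T = B\<^sup>T * A\<^sup>T"
  by (rule transpose_mult[of A "dim_row A" "dim_col A" B "dim_col B"]) auto

lemmas mat_dims_simps = assoc_mult_mat_dims assoc_mult_mat_vec_dims transpose_mult_dims

lemma mult_mat_vec_zero [simp]:
  "A \<in> carrier_mat nr nc \<Longrightarrow> A *\<^sub>v 0\<^sub>v nc = (0\<^sub>v nr :: 'a :: semiring_0 vec)"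
  by (rule eq_vecI) auto

lemma zero_mult_mat_vec [simp]:
  "v \<in> carrier_vec nc \<Longrightarrow> 0\<^sub>m nr nc *\<^sub>v v = (0\<^sub>v nr :: 'a :: semiring_0 vec)"
  by (rule eq_vecI) auto

lemma append_zero_vec [simp]: "0\<^sub>v n @\<^sub>v 0\<^sub>v m = (0\<^sub>v (n + m) :: 'a :: zero vec)"
  by (rule eq_vecI) auto

lemma quad_form_congruence:
  fixes B C :: "'a :: comm_semiring_0 mat"
  assumes B: "B \<in> carrier_mat n m" and C: "C \<in> carrier_mat n n" and v: "v \<in> carrier_vec m"
  shows "v \<bullet> (B\<^sup>T * C * B *\<^sub>v v) = (B *\<^sub>v v) \<bullet> (C *\<^sub>v (B *\<^sub>v v))"
proof -
  have Bv: "B *\<^sub>v v \<in> carrier_vec n" and CBv: "C *\<^sub>v (B *\<^sub>v v) \<in> carrier_vec n"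
    using B C v by auto
  have "v \<bullet> (B\<^sup>T * C * B *\<^sub>v v) = v \<bullet> (B\<^sup>T *\<^sub>v (C *\<^sub>v (B *\<^sub>v v)))"
    using B C v by (simp add: mat_dims_simps)
  also have "\<dots> = (B\<^sup>T *\<^sub>v (C *\<^sub>v (B *\<^sub>v v))) \<bullet> v"
    using B v CBv by (intro comm_scalar_prod[of _ m]) auto
  also have "\<dots> = (C *\<^sub>v (B *\<^sub>v v)) \<bullet> (B *\<^sub>v v)"
    by (rule transpose_vec_mult_scalar[OF B v CBv])
  also have "\<dots> = (B *\<^sub>v v) \<bullet> (C *\<^sub>v (B *\<^sub>v v))"
    using comm_scalar_prod[OF CBv Bv] .
  finally show ?thesis .
qed

lemma inverse_mat_symmetric:
  fixes S Si :: "'a :: comm_ring_1 mat"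
  assumes S: "S \<in> carrier_mat n n" and Si: "Si \<in> carrier_mat n n" and "S\<^sup>T = S"
    and "Si * S = 1\<^sub>m n" and "S * Si = 1\<^sub>m n"
  shows "Si\<^sup>T = Si"
proof -
  have "Si\<^sup>T * S = 1\<^sub>m n"
    using assms transpose_mult[OF S Si] by (metis transpose_one)
  have "Si\<^sup>T = Si\<^sup>T * (S * Si)"
    using assms by simp
  also have "\<dots> = Si\<^sup>T * S * Si"
    using S Si by (simp add: assoc_mult_mat[of "Si\<^sup>T" n n S n Si n])
  also have "\<dots> = Si"
    using \<open>Si\<^sup>T * S = 1\<^sub>m n\<close> Si by simp
  finally show ?thesis .
qed

lemma invertible_mat_of_kernel_trivial:
  fixes S :: "'a :: field mat"
  assumes S: "S \<in> carrier_mat n n"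
    and ker: "\<And>c. c \<in> carrier_vec n \<Longrightarrow> S *\<^sub>v c = 0\<^sub>v n \<Longrightarrow> c = 0\<^sub>v n"
  shows "invertible_mat S"
proof -
  have "det S \<noteq> 0"
    using det_0_iff_vec_prod_zero_field[OF S] ker by auto
  from det_non_zero_imp_unit[OF S this, of undefined]
  obtain B where "B \<in> carrier_mat n n" "B * S = 1\<^sub>m n" "S * B = 1\<^sub>m n"
    unfolding Units_def ring_mat_def by auto
  then show ?thesis
    using S unfolding invertible_mat_def inverts_mat_def by auto
qed

lemma (in vec_space) full_col_rank_kernel_trivial:
  assumes A: "A \<in> carrier_mat n nc" and rk: "rank A = nc"
    and v: "v \<in> carrier_vec nc" and Av: "A *\<^sub>v v = 0\<^sub>v n"
  shows "v = 0\<^sub>v nc"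
proof (rule ccontr)
  assume v0: "v \<noteq> 0\<^sub>v nc"
  have "distinct (cols A)"
  proof (rule ccontr)
    assume nd: "\<not> distinct (cols A)"
    obtain S where S: "maximal S (\<lambda>T. T \<subseteq> set (cols A) \<and> lin_indpt T)"
      using maximal_exists[of "(\<lambda>T. T \<subseteq> set (cols A) \<and> lin_indpt T)" "card (set (cols A))" "{}"]
      by (meson List.finite_set card_mono empty_iff empty_subsetI finite_lin_indpt2 rev_finite_subset)
    then have "card S \<le> card (set (cols A))"
      by (simp add: card_mono maximal_def)
    also have "\<dots> < nc"
      using A nd card_distinct card_length cols_length carrier_matD(2) nat_less_le by metis
    finally show False
      using rank_card_indpt[OF A S] rk by simp
  qed
  then show False
    using full_rank_lin_indpt[OF A rk] lin_depI[OF A v v0 Av] by simp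
qed

lemma orthonormal_complement_eq_0:
  fixes F A :: "real mat"
  assumes F: "F \<in> carrier_mat n m" and A: "A \<in> carrier_mat n (n - m)" and "m \<le> n"
    and FF: "F\<^sup>T * F = 1\<^sub>m m" and AA: "A\<^sup>T * A = 1\<^sub>m (n - m)" and FA: "F\<^sup>T * A = 0\<^sub>m m (n - m)"
    and w: "w \<in> carrier_vec n" and Fw: "F\<^sup>T *\<^sub>v w = 0\<^sub>v m" and Aw: "A\<^sup>T *\<^sub>v w = 0\<^sub>v (n - m)"
  shows "w = 0\<^sub>v n"
proof -
  define Q where "Q = mat n n (\<lambda>(i, j). if j < m then F $$ (i, j) else A $$ (i, j - m))"
  have Q: "Q \<in> carrier_mat n n" "Q\<^sup>T \<in> carrier_mat n n"
    unfolding Q_def by auto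
  have col_Q: "col Q j = (if j < m then col F j else col A (j - m))" if "j < n" for j
    by (rule eq_vecI) (use F A that in \<open>auto simp: Q_def\<close>)
  have col_F_A: "col F i \<bullet> col A j = 0" "col A j \<bullet> col F i = 0" if "i < m" "j < n - m" for i j
    using arg_cong[OF FA, of "\<lambda>B. B $$ (i, j)"] that F A comm_scalar_prod[of "col A j" n "col F i"]
    by auto
  have "Q\<^sup>T * Q = 1\<^sub>m n"
  proof (rule eq_matI)
    fix i j assume ij: "i < dim_row (1\<^sub>m n)" "j < dim_col (1\<^sub>m n)"
    have "(Q\<^sup>T * Q) $$ (i, j) = col Q i \<bullet> col Q j"
      using Q ij by simp
    also have "\<dots> = 1\<^sub>m n $$ (i, j)"
      using ij \<open>m \<le> n\<close> arg_cong[OF FF, of "\<lambda>B. B $$ (i, j)"] F col_F_A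
        arg_cong[OF AA, of "\<lambda>B. B $$ (i - m, j - m)"] A
      by (auto simp: col_Q)
    finally show "(Q\<^sup>T * Q) $$ (i, j) = 1\<^sub>m n $$ (i, j)" .
  qed (use Q in auto)
  then have QQ: "Q * Q\<^sup>T = 1\<^sub>m n"
    using mat_mult_left_right_inverse[OF Q(2,1)] by blast
  have "Q\<^sup>T *\<^sub>v w = 0\<^sub>v n"
  proof (rule eq_vecI)
    fix i assume i: "i < dim_vec (0\<^sub>v n :: real vec)"
    have "(Q\<^sup>T *\<^sub>v w) $ i = col Q i \<bullet> w"
      using Q i by simp
    also have "\<dots> = 0"
      using i F A arg_cong[OF Fw, of "\<lambda>v. v $ i"] arg_cong[OF Aw, of "\<lambda>v. v $ (i - m)"]
      by (auto simp: col_Q)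
    finally show "(Q\<^sup>T *\<^sub>v w) $ i = 0\<^sub>v n $ i"
      using i by simp
  qed (use Q in auto)
  then have "Q * Q\<^sup>T *\<^sub>v w = 0\<^sub>v n"
    using Q w by simp
  then show ?thesis
    using QQ w by simp
qed

section \<open>The pseudo-inverse built from a spectral decomposition\<close>

lemma diag_inv_carrier [simp]: "L \<in> carrier_mat n n \<Longrightarrow> diag_inv L \<in> carrier_mat n n"
  by (simp add: diag_inv_def)

lemma dim_diag_inv [simp]:
  "dim_row (diag_inv L) = dim_row L" "dim_col (diag_inv L) = dim_row L"
  by (simp_all add: diag_inv_def)

lemma transpose_diag_inv [simp]: "(diag_inv L)\<^sup>T = diag_inv L"
  by (rule eq_matI) (auto simp: diag_inv_def)

lemma diag_inv_mult:
  assumes L: "L \<in> carrier_mat n n" and "diagonal_mat L" and nz: "\<forall>i<n. L $$ (i, i) \<noteq> 0"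
  shows "diag_inv L * L = 1\<^sub>m n"
proof (rule eq_matI)
  fix i j assume ij: "i < dim_row (1\<^sub>m n)" "j < dim_col (1\<^sub>m n)"
  have "(diag_inv L * L) $$ (i, j) = (\<Sum>l<n. (if i = l then 1 / L $$ (i, i) else 0) * L $$ (l, j))"
    using ij L by (simp add: diag_inv_def scalar_prod_def lessThan_atLeast0)
  also have "\<dots> = L $$ (i, j) / L $$ (i, i)"
    using ij by (simp add: if_distrib[of "\<lambda>x. x * _"] cong: if_cong)
  also have "\<dots> = 1\<^sub>m n $$ (i, j)"
    using ij nz \<open>diagonal_mat L\<close> L unfolding diagonal_mat_def by auto
  finally show "(diag_inv L * L) $$ (i, j) = 1\<^sub>m n $$ (i, j)" .
qed (use L in \<open>auto simp: diag_inv_def\<close>)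

lemma diag_inv_quad_form_eq_0:
  assumes L: "L \<in> carrier_mat n n" and pos: "\<forall>i<n. 0 < L $$ (i, i)"
    and w: "w \<in> carrier_vec n" and "w \<bullet> (diag_inv L *\<^sub>v w) = 0"
  shows "w = 0\<^sub>v n"
proof -
  define f where "f i = w $ i * w $ i / L $$ (i, i)" for i
  have "(\<Sum>i<n. f i) = w \<bullet> (diag_inv L *\<^sub>v w)"
    using L w by (simp add: f_def scalar_prod_def diag_inv_def lessThan_atLeast0
        if_distrib[of "\<lambda>x. x * _"] cong: if_cong)
  also have "\<dots> = 0" by fact
  finally have "(\<Sum>i<n. f i) = 0" .
  moreover have "0 \<le> f i" if "i < n" for i
    using pos that by (simp add: f_def less_imp_le)
  ultimately have "f i = 0" if "i < n" for i
    using that sum_nonneg_eq_0_iff[of "{..<n}" f] by simp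
  then have "w $ i = 0" if "i < n" for i
    using pos that by (fastforce simp: f_def)
  then show ?thesis
    using w by (intro eq_vecI) auto
qed

lemma eig_pinv_carrier [simp]:
  "F \<in> carrier_mat n m \<Longrightarrow> L \<in> carrier_mat m m \<Longrightarrow> eig_pinv F L \<in> carrier_mat n n"
  unfolding eig_pinv_def carrier_mat_def by (simp add: diag_inv_def)

lemma transpose_eig_pinv:
  assumes "F \<in> carrier_mat n m" and "L \<in> carrier_mat m m"
  shows "(eig_pinv F L)\<^sup>T = eig_pinv F L"
  using assms by (simp add: eig_pinv_def mat_dims_simps)

context
  fixes F L :: "real mat" and n m :: nat
  assumes F: "F \<in> carrier_mat n m" and L: "L \<in> carrier_mat m m"
    and FF: "F\<^sup>T * F = 1\<^sub>m m" and diag_L: "diagonal_mat L" and pos_L: "\<forall>i<m. 0 < L $$ (i, i)"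
begin

lemma eig_pinv_reflexive:
  "eig_pinv F L * (F * L * F\<^sup>T) * eig_pinv F L = eig_pinv F L"
proof -
  have "diag_inv L * L = 1\<^sub>m m"
    by (rule diag_inv_mult[OF L diag_L]) (use pos_L in force)
  have "eig_pinv F L * (F * L * F\<^sup>T) * eig_pinv F L
      = F * (diag_inv L * ((F\<^sup>T * F) * (L * ((F\<^sup>T * F) * (diag_inv L * F\<^sup>T)))))"
    using F L unfolding eig_pinv_def by (simp add: mat_dims_simps)
  also have "\<dots> = F * ((diag_inv L * L) * (diag_inv L * F\<^sup>T))"
    using F L unfolding FF by (simp add: mat_dims_simps)
  also have "\<dots> = eig_pinv F L"
    using F L unfolding \<open>diag_inv L * L = 1\<^sub>m m\<close> eig_pinv_def by (simp add: mat_dims_simps)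
  finally show ?thesis .
qed

lemma spectral_factor_orth_kernel:
  assumes A: "A \<in> carrier_mat n p" and "F * L * F\<^sup>T * A = 0\<^sub>m n p"
  shows "F\<^sup>T * A = 0\<^sub>m m p"
proof -
  have "diag_inv L * L = 1\<^sub>m m"
    by (rule diag_inv_mult[OF L diag_L]) (use pos_L in force)
  then have "F\<^sup>T * A = (diag_inv L * L) * (F\<^sup>T * A)"
    using F A by simp
  also have "\<dots> = diag_inv L * ((F\<^sup>T * F) * (L * (F\<^sup>T * A)))"
    using F L A unfolding FF by (simp add: mat_dims_simps)
  also have "\<dots> = diag_inv L * (F\<^sup>T * (F * L * F\<^sup>T * A))"
    using F L A by (simp add: mat_dims_simps)
  finally show ?thesis
    using assms L F by simp
qed

lemma eig_pinv_quad_form_eq_0: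
  assumes v: "v \<in> carrier_vec n" and "v \<bullet> (eig_pinv F L *\<^sub>v v) = 0"
  shows "F\<^sup>T *\<^sub>v v = 0\<^sub>v m"
proof -
  have "v \<bullet> (eig_pinv F L *\<^sub>v v) = (F\<^sup>T *\<^sub>v v) \<bullet> (diag_inv L *\<^sub>v (F\<^sup>T *\<^sub>v v))"
    using quad_form_congruence[of "F\<^sup>T" m n "diag_inv L" v] F L v by (simp add: eig_pinv_def)
  then show ?thesis
    using diag_inv_quad_form_eq_0[OF L pos_L, of "F\<^sup>T *\<^sub>v v"] assms F by simp
qed

end

section \<open>Linear systems parametrised by a null-space basis\<close>

lemma invertible_compression:
  fixes N C :: "real mat"
  assumes N: "N \<in> carrier_mat n k" and C: "C \<in> carrier_mat n n" and NN: "N\<^sup>T * N = 1\<^sub>m k"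
    and definite: "\<And>c. c \<in> carrier_vec k \<Longrightarrow> (N *\<^sub>v c) \<bullet> (C *\<^sub>v (N *\<^sub>v c)) = 0 \<Longrightarrow> N *\<^sub>v c = 0\<^sub>v n"
  shows "invertible_mat (N\<^sup>T * C * N)"
proof (rule invertible_mat_of_kernel_trivial)
  show "N\<^sup>T * C * N \<in> carrier_mat k k"
    using N C by simp
  fix c assume c: "c \<in> carrier_vec k" and "N\<^sup>T * C * N *\<^sub>v c = 0\<^sub>v k"
  then have "(N *\<^sub>v c) \<bullet> (C *\<^sub>v (N *\<^sub>v c)) = 0"
    using quad_form_congruence[OF N C c] by simp
  then have "N *\<^sub>v c = 0\<^sub>v n"
    using definite c by blast
  then have "N\<^sup>T * N *\<^sub>v c = 0\<^sub>v k"
    using N c by simp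
  then show "c = 0\<^sub>v k"
    using NN c by simp
qed

context
  fixes H N C Si :: "real mat" and m n k :: nat
  assumes H: "H \<in> carrier_mat m n" and N: "N \<in> carrier_mat n k"
    and C: "C \<in> carrier_mat n n" and Si: "Si \<in> carrier_mat k k"
    and HN: "H * N = 0\<^sub>m m k"
    and ker_H: "\<forall>v \<in> carrier_vec n. H *\<^sub>v v = 0\<^sub>v m \<longrightarrow> (\<exists>c \<in> carrier_vec k. v = N *\<^sub>v c)"
    and Si_left: "Si * (N\<^sup>T * C * N) = 1\<^sub>m k" and Si_right: "N\<^sup>T * C * N * Si = 1\<^sub>m k"
begin

lemma null_space_solution_eq:
  assumes b0: "b0 \<in> carrier_vec n" and b1: "b1 \<in> carrier_vec n" and d: "d \<in> carrier_vec n"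
    and "H *\<^sub>v b1 = H *\<^sub>v b0"
  shows "N * Si * N\<^sup>T *\<^sub>v d + (1\<^sub>m n - N * Si * N\<^sup>T * C) *\<^sub>v b1
    = b0 + N * Si * N\<^sup>T *\<^sub>v (d - C *\<^sub>v b0)"
proof -
  define W where "W = N * Si * N\<^sup>T"
  have W: "W \<in> carrier_mat n n"
    using N Si by (simp add: W_def)
  have "H *\<^sub>v (b1 - b0) = 0\<^sub>v m"
    using assms H by (simp add: mult_minus_distrib_mat_vec)
  then obtain c where c: "c \<in> carrier_vec k" and b1_b0: "b1 - b0 = N *\<^sub>v c"
    using ker_H b0 b1 by (meson minus_carrier_vec)
  have "W * C * N = N * (Si * (N\<^sup>T * C * N))"
    using N C Si by (simp add: W_def mat_dims_simps)
  then have WCN: "W * C * N = N"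
    using N by (simp add: Si_left)
  have "W *\<^sub>v (C *\<^sub>v b1) - W *\<^sub>v (C *\<^sub>v b0) = W * C * N *\<^sub>v c"
    using W C N b0 b1 c b1_b0
    by (simp add: mult_minus_distrib_mat_vec[symmetric] mat_dims_simps flip: b1_b0)
  then have key: "W *\<^sub>v (C *\<^sub>v b1) - W *\<^sub>v (C *\<^sub>v b0) = b1 - b0"
    by (simp add: WCN b1_b0)
  have "(1\<^sub>m n - W * C) *\<^sub>v b1 = b1 - W *\<^sub>v (C *\<^sub>v b1)"
    using W C b1 by (simp add: minus_mult_distrib_mat_vec[of "1\<^sub>m n" n n "W * C"] mat_dims_simps)
  moreover have "W *\<^sub>v (d - C *\<^sub>v b0) = W *\<^sub>v d - W *\<^sub>v (C *\<^sub>v b0)"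
    using W C d b0 by (simp add: mult_minus_distrib_mat_vec)
  ultimately show ?thesis
    unfolding W_def[symmetric]
  proof (intro eq_vecI)
    fix i assume "i < dim_vec (b0 + W *\<^sub>v (d - C *\<^sub>v b0))"
    then have "i < n"
      using W b0 by simp
    then show "(W *\<^sub>v d + (1\<^sub>m n - W * C) *\<^sub>v b1) $ i = (b0 + W *\<^sub>v (d - C *\<^sub>v b0)) $ i"
      using arg_cong[OF key, of "\<lambda>v :: real vec. v $ i"] W C b0 b1 d \<open>(1\<^sub>m n - W * C) *\<^sub>v b1 = _\<close>
        \<open>W *\<^sub>v (d - C *\<^sub>v b0) = _\<close> by simp
  qed (use W b0 in simp)
qed

lemma null_space_solution_solves:
  assumes b0: "b0 \<in> carrier_vec n" and d: "d \<in> carrier_vec n"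
  defines "b \<equiv> N * Si * N\<^sup>T *\<^sub>v d + (1\<^sub>m n - N * Si * N\<^sup>T * C) *\<^sub>v b0"
  shows "H *\<^sub>v b = H *\<^sub>v b0" and "N\<^sup>T * C *\<^sub>v b = N\<^sup>T *\<^sub>v d"
proof -
  define W where "W = N * Si * N\<^sup>T"
  define e where "e = d - C *\<^sub>v b0"
  have W: "W \<in> carrier_mat n n" and e: "e \<in> carrier_vec n"
    using N Si C b0 d by (simp_all add: W_def e_def)
  have b: "b = b0 + W *\<^sub>v e"
    unfolding b_def e_def W_def by (rule null_space_solution_eq[OF b0 b0 d refl])
  have "H * W = (H * N) * (Si * N\<^sup>T)"
    using H N Si by (simp add: W_def mat_dims_simps)
  then have "H * W = 0\<^sub>m m n"
    using HN N Si by simp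
  then have "H *\<^sub>v (W *\<^sub>v e) = 0\<^sub>v m"
    using H W e by (simp flip: assoc_mult_mat_vec[of H m n W n])
  then show "H *\<^sub>v b = H *\<^sub>v b0"
    unfolding b using H W b0 e by (simp add: mult_add_distrib_mat_vec[of H m n])
  have "N\<^sup>T * C * W = (N\<^sup>T * C * N * Si) * N\<^sup>T"
    using C N Si by (simp add: W_def mat_dims_simps)
  then have "N\<^sup>T * C * W = N\<^sup>T"
    using N by (simp add: Si_right)
  moreover have "N\<^sup>T * C *\<^sub>v (W *\<^sub>v e) = N\<^sup>T * C * W *\<^sub>v e"
    using C N W e by (simp add: mat_dims_simps)
  ultimately have "N\<^sup>T * C *\<^sub>v b = N\<^sup>T * C *\<^sub>v b0 + N\<^sup>T *\<^sub>v e"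
    unfolding b using mult_add_distrib_mat_vec[of "N\<^sup>T * C" k n b0 "W *\<^sub>v e"] C N W b0 e by simp
  also have "\<dots> = N\<^sup>T *\<^sub>v d"
    using C N b0 d by (intro eq_vecI) (auto simp: e_def mult_minus_distrib_mat_vec mat_dims_simps)
  finally show "N\<^sup>T * C *\<^sub>v b = N\<^sup>T *\<^sub>v d" .
qed

lemma null_space_solution_unique:
  assumes b: "b \<in> carrier_vec n" and b': "b' \<in> carrier_vec n"
    and "H *\<^sub>v b = H *\<^sub>v b'" and "N\<^sup>T * C *\<^sub>v b = N\<^sup>T * C *\<^sub>v b'"
  shows "b = b'"
proof -
  have "H *\<^sub>v (b - b') = 0\<^sub>v m"
    using assms H by (simp add: mult_minus_distrib_mat_vec)
  then obtain c where c: "c \<in> carrier_vec k" and b_b': "b - b' = N *\<^sub>v c"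
    using ker_H b b' by (meson minus_carrier_vec)
  have "N\<^sup>T * C * N *\<^sub>v c = N\<^sup>T * C *\<^sub>v b - N\<^sup>T * C *\<^sub>v b'"
    using N C b b' c by (simp add: mult_minus_distrib_mat_vec[symmetric] mat_dims_simps flip: b_b')
  then have "N\<^sup>T * C * N *\<^sub>v c = 0\<^sub>v k"
    using assms N C by simp
  then have "c = 0\<^sub>v k"
    using arg_cong[OF Si_left, of "\<lambda>B. B *\<^sub>v c"] N C Si c by (simp add: mat_dims_simps)
  then have "b - b' = 0\<^sub>v n"
    using b_b' N by simp
  show ?thesis
  proof (rule eq_vecI)
    fix i assume "i < dim_vec b'"
    then have "(b - b') $ i = 0"
      using \<open>b - b' = 0\<^sub>v n\<close> b' by simp
    then show "b $ i = b' $ i"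
      using b b' \<open>i < dim_vec b'\<close> by simp
  qed (use b b' in simp)
qed

end

section \<open>Moments of affine transforms of random vectors\<close>

lemma vexp_affine:
  fixes u Z :: "'w \<Rightarrow> real vec" and G :: "real mat"
  assumes P: "prob_space P" and G: "G \<in> carrier_mat n T" and b: "b \<in> carrier_vec n"
    and u: "\<forall>\<omega> \<in> space P. u \<omega> \<in> carrier_vec T"
    and int_u: "\<forall>l<T. integrable P (\<lambda>\<omega>. u \<omega> $ l)"
    and Z: "\<forall>\<omega> \<in> space P. Z \<omega> = b + G *\<^sub>v u \<omega>"
  shows "vexp P Z n = b + G *\<^sub>v vexp P u T"
proof (rule eq_vecI)
  interpret prob_space P by (rule P)
  fix i assume "i < dim_vec (b + G *\<^sub>v vexp P u T)"
  then have i: "i < n"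
    using G b by simp
  have "vexp P Z n $ i = (\<integral>\<omega>. b $ i + (\<Sum>l<T. G $$ (i, l) * u \<omega> $ l) \<partial>P)"
    using i Z u G b
    by (auto simp: vexp_def scalar_prod_def lessThan_atLeast0 intro!: Bochner_Integration.integral_cong)
  also have "\<dots> = b $ i + (\<integral>\<omega>. (\<Sum>l<T. G $$ (i, l) * u \<omega> $ l) \<partial>P)"
    using int_u by (subst Bochner_Integration.integral_add) (auto simp: prob_space)
  also have "\<dots> = b $ i + (\<Sum>l<T. G $$ (i, l) * (\<integral>\<omega>. u \<omega> $ l \<partial>P))"
    using int_u by (subst Bochner_Integration.integral_sum) auto
  also have "\<dots> = (b + G *\<^sub>v vexp P u T) $ i"
    using i G b by (simp add: vexp_def scalar_prod_def lessThan_atLeast0)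
  finally show "vexp P Z n $ i = (b + G *\<^sub>v vexp P u T) $ i" .
qed (use G b in \<open>simp add: vexp_def\<close>)

lemma vcov_affine:
  fixes u Z :: "'w \<Rightarrow> real vec" and G :: "real mat"
  assumes P: "prob_space P" and G: "G \<in> carrier_mat n T" and b: "b \<in> carrier_vec n"
    and u: "\<forall>\<omega> \<in> space P. u \<omega> \<in> carrier_vec T"
    and int_u: "\<forall>l<T. integrable P (\<lambda>\<omega>. u \<omega> $ l)"
    and int_uu: "\<forall>l<T. \<forall>m<T. integrable P (\<lambda>\<omega>. u \<omega> $ l * u \<omega> $ m)"
    and Eu: "vexp P u T = 0\<^sub>v T"
    and Z: "\<forall>\<omega> \<in> space P. Z \<omega> = b + G *\<^sub>v u \<omega>"
  shows "vcov P Z n = G * vsecond P u T * G\<^sup>T"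
proof (rule eq_matI)
  fix i j assume "i < dim_row (G * vsecond P u T * G\<^sup>T)" "j < dim_col (G * vsecond P u T * G\<^sup>T)"
  then have i: "i < n" and j: "j < n"
    using G by simp_all
  have EZ: "vexp P Z n = b"
    using vexp_affine[OF P G b u int_u Z] Eu G b by simp
  have "vcov P Z n $$ (i, j)
      = (\<integral>\<omega>. (\<Sum>l<T. \<Sum>m<T. G $$ (i, l) * G $$ (j, m) * (u \<omega> $ l * u \<omega> $ m)) \<partial>P)"
    using i j Z u G b
    by (auto simp: vcov_def EZ scalar_prod_def lessThan_atLeast0 sum_product mult_ac
        intro!: Bochner_Integration.integral_cong)
  also have "\<dots> = (\<Sum>l<T. \<integral>\<omega>. (\<Sum>m<T. G $$ (i, l) * G $$ (j, m) * (u \<omega> $ l * u \<omega> $ m)) \<partial>P)"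
    using int_uu by (intro Bochner_Integration.integral_sum Bochner_Integration.integrable_sum
        integrable_mult_right) auto
  also have "\<dots> = (\<Sum>l<T. \<Sum>m<T. G $$ (i, l) * G $$ (j, m) * (\<integral>\<omega>. u \<omega> $ l * u \<omega> $ m \<partial>P))"
    using int_uu by (intro sum.cong refl, subst Bochner_Integration.integral_sum) auto
  also have "\<dots> = (\<Sum>m<T. \<Sum>l<T. G $$ (i, l) * G $$ (j, m) * vsecond P u T $$ (l, m))"
    by (subst sum.swap) (simp add: vsecond_def)
  also have "\<dots> = (G * vsecond P u T * G\<^sup>T) $$ (i, j)"
    using i j G
    by (simp add: vsecond_def scalar_prod_def lessThan_atLeast0 sum_distrib_left mult_ac)
  finally show "vcov P Z n $$ (i, j) = (G * vsecond P u T * G\<^sup>T) $$ (i, j)" .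
qed (use G in \<open>simp_all add: vcov_def\<close>)

section \<open>The restricted GLS estimator\<close>

lemma restricted_gls_identification:
  fixes X R F L A :: "real mat"
  assumes X: "X \<in> carrier_mat T K" and R: "R \<in> carrier_mat q K"
    and F: "F \<in> carrier_mat T M" and L: "L \<in> carrier_mat M M" and A: "A \<in> carrier_mat T (T - M)"
    and "M \<le> T" and FF: "F\<^sup>T * F = 1\<^sub>m M" and AA: "A\<^sup>T * A = 1\<^sub>m (T - M)"
    and FA: "F\<^sup>T * A = 0\<^sub>m M (T - M)"
    and diag_L: "diagonal_mat L" and pos_L: "\<forall>i<M. 0 < L $$ (i, i)"
    and rank: "rk (R @\<^sub>r X) = K"
    and z: "z \<in> carrier_vec K" and Hz: "(R @\<^sub>r (A\<^sup>T * X)) *\<^sub>v z = 0\<^sub>v (q + (T - M))"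
    and "(X *\<^sub>v z) \<bullet> (eig_pinv F L *\<^sub>v (X *\<^sub>v z)) = 0"
  shows "z = 0\<^sub>v K"
proof -
  have Xz: "X *\<^sub>v z \<in> carrier_vec T"
    using X z by simp
  have "(R *\<^sub>v z) @\<^sub>v (A\<^sup>T * X *\<^sub>v z) = 0\<^sub>v (q + (T - M))"
    using Hz mat_mult_append[of R q K "A\<^sup>T * X" "T - M" z] R A X z by simp
  also have "\<dots> = 0\<^sub>v q @\<^sub>v 0\<^sub>v (T - M)"
    by simp
  finally have Rz: "R *\<^sub>v z = 0\<^sub>v q" and "A\<^sup>T * X *\<^sub>v z = 0\<^sub>v (T - M)"
    using append_vec_eq[of "R *\<^sub>v z" q "0\<^sub>v q" "A\<^sup>T * X *\<^sub>v z" "0\<^sub>v (T - M)"] R z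
    by (simp_all del: append_zero_vec)
  then have "A\<^sup>T *\<^sub>v (X *\<^sub>v z) = 0\<^sub>v (T - M)"
    using A X z by simp
  moreover have "F\<^sup>T *\<^sub>v (X *\<^sub>v z) = 0\<^sub>v M"
    using eig_pinv_quad_form_eq_0[OF F L FF diag_L pos_L Xz] assms by simp
  ultimately have "X *\<^sub>v z = 0\<^sub>v T"
    using orthonormal_complement_eq_0[OF F A \<open>M \<le> T\<close> FF AA FA Xz] by simp
  then have "(R @\<^sub>r X) *\<^sub>v z = 0\<^sub>v (q + T)"
    using Rz mat_mult_append[of R q K X T z] R X z by simp
  moreover have RX: "R @\<^sub>r X \<in> carrier_mat (q + T) K"
    using R X by auto
  moreover have "vec_space.rank (q + T) (R @\<^sub>r X) = K"
    using rank RX unfolding rk_def by simp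
  ultimately show ?thesis
    using vec_space.full_col_rank_kernel_trivial[of "R @\<^sub>r X" "q + T" K z] z by simp
qed

lemma restricted_gls_normal_matrix_invertible:
  fixes X R F L A N :: "real mat"
  assumes X: "X \<in> carrier_mat T K" and R: "R \<in> carrier_mat q K"
    and F: "F \<in> carrier_mat T M" and L: "L \<in> carrier_mat M M" and A: "A \<in> carrier_mat T (T - M)"
    and N: "N \<in> carrier_mat K k"
    and "M \<le> T" and "F\<^sup>T * F = 1\<^sub>m M" and "A\<^sup>T * A = 1\<^sub>m (T - M)" and "F\<^sup>T * A = 0\<^sub>m M (T - M)"
    and "diagonal_mat L" and "\<forall>i<M. 0 < L $$ (i, i)" and "rk (R @\<^sub>r X) = K"
    and NN: "N\<^sup>T * N = 1\<^sub>m k" and HN: "(R @\<^sub>r (A\<^sup>T * X)) * N = 0\<^sub>m (q + (T - M)) k"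
  shows "invertible_mat (N\<^sup>T * (X\<^sup>T * eig_pinv F L * X) * N)"
proof -
  have Pi: "eig_pinv F L \<in> carrier_mat T T"
    using F L by simp
  have H: "R @\<^sub>r (A\<^sup>T * X) \<in> carrier_mat (q + (T - M)) K"
    using R A X by auto
  show ?thesis
  proof (rule invertible_compression[OF N _ NN])
    fix c assume c: "c \<in> carrier_vec k"
      and "(N *\<^sub>v c) \<bullet> (X\<^sup>T * eig_pinv F L * X *\<^sub>v (N *\<^sub>v c)) = 0"
    then have "(X *\<^sub>v (N *\<^sub>v c)) \<bullet> (eig_pinv F L *\<^sub>v (X *\<^sub>v (N *\<^sub>v c))) = 0"
      using quad_form_congruence[OF X Pi, of "N *\<^sub>v c"] N by simp
    moreover have "(R @\<^sub>r (A\<^sup>T * X)) *\<^sub>v (N *\<^sub>v c) = 0\<^sub>v (q + (T - M))"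
      using HN H N c by (simp flip: assoc_mult_mat_vec[of _ "q + (T - M)" K N k])
    ultimately show "N *\<^sub>v c = 0\<^sub>v K"
      using restricted_gls_identification[OF X R F L A, of "N *\<^sub>v c"] assms c by simp
  qed (use X Pi in simp)
qed

lemma gls_sandwich_eq:
  fixes X N Si Pi \<Omega> :: "real mat"
  assumes X: "X \<in> carrier_mat T K" and N: "N \<in> carrier_mat K k" and Si: "Si \<in> carrier_mat k k"
    and Pi: "Pi \<in> carrier_mat T T" and \<Omega>: "\<Omega> \<in> carrier_mat T T"
    and Pi_sym: "Pi\<^sup>T = Pi" and Pi_\<Omega>_Pi: "Pi * \<Omega> * Pi = Pi" and Si_sym: "Si\<^sup>T = Si"
    and Si_left: "Si * (N\<^sup>T * (X\<^sup>T * Pi * X) * N) = 1\<^sub>m k"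
  shows "N * Si * N\<^sup>T * X\<^sup>T * Pi * \<Omega> * (N * Si * N\<^sup>T * X\<^sup>T * Pi)\<^sup>T = N * Si * N\<^sup>T"
proof -
  have Pi_\<Omega>_Pi': "Pi * (\<Omega> * (Pi * B)) = Pi * B" if "dim_row B = T" for B :: "real mat"
  proof -
    have "Pi * (\<Omega> * (Pi * B)) = Pi * \<Omega> * Pi * B"
      using Pi \<Omega> that by (simp add: mat_dims_simps)
    then show ?thesis
      by (simp only: Pi_\<Omega>_Pi)
  qed
  have "N * Si * N\<^sup>T * X\<^sup>T * Pi * \<Omega> * (N * Si * N\<^sup>T * X\<^sup>T * Pi)\<^sup>T
      = N * (Si * (N\<^sup>T * (X\<^sup>T * Pi * X) * N)) * (Si * N\<^sup>T)"
    using X N Si Pi \<Omega> by (simp add: mat_dims_simps Pi_sym Si_sym Pi_\<Omega>_Pi')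
  also have "\<dots> = N * Si * N\<^sup>T"
    using N Si by (simp add: Si_left mat_dims_simps)
  finally show ?thesis .
qed

lemma restricted_normal_equations_solution:
  fixes H N X Pi Si :: "real mat" and \<beta> \<beta>s y :: "real vec"
  assumes H: "H \<in> carrier_mat m K" and N: "N \<in> carrier_mat K k" and X: "X \<in> carrier_mat T K"
    and Pi: "Pi \<in> carrier_mat T T" and Si: "Si \<in> carrier_mat k k"
    and HN: "H * N = 0\<^sub>m m k"
    and ker_H: "\<forall>v \<in> carrier_vec K. H *\<^sub>v v = 0\<^sub>v m \<longrightarrow> (\<exists>c \<in> carrier_vec k. v = N *\<^sub>v c)"
    and Si_left: "Si * (N\<^sup>T * (X\<^sup>T * Pi * X) * N) = 1\<^sub>m k"
    and Si_right: "N\<^sup>T * (X\<^sup>T * Pi * X) * N * Si = 1\<^sub>m k"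
    and \<beta>: "\<beta> \<in> carrier_vec K" and \<beta>s: "\<beta>s \<in> carrier_vec K" and H_\<beta>s: "H *\<^sub>v \<beta>s = H *\<^sub>v \<beta>"
    and y: "y \<in> carrier_vec T"
  defines "bhat \<equiv> N * Si * N\<^sup>T * X\<^sup>T * Pi *\<^sub>v y + (1\<^sub>m K - N * Si * N\<^sup>T * (X\<^sup>T * Pi * X)) *\<^sub>v \<beta>s"
  shows "H *\<^sub>v bhat = H *\<^sub>v \<beta>"
    and "N\<^sup>T * (X\<^sup>T * Pi * X) *\<^sub>v bhat = N\<^sup>T * X\<^sup>T * Pi *\<^sub>v y"
    and "\<And>b. b \<in> carrier_vec K \<Longrightarrow> H *\<^sub>v b = H *\<^sub>v \<beta> \<Longrightarrow>
           N\<^sup>T * (X\<^sup>T * Pi * X) *\<^sub>v b = N\<^sup>T * X\<^sup>T * Pi *\<^sub>v y \<Longrightarrow> b = bhat"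
    and "bhat = \<beta> + N * Si * N\<^sup>T * X\<^sup>T * Pi *\<^sub>v (y - X *\<^sub>v \<beta>)"
proof -
  define C where "C = X\<^sup>T * Pi * X"
  define d where "d = X\<^sup>T * Pi *\<^sub>v y"
  have C: "C \<in> carrier_mat K K" and d: "d \<in> carrier_vec K"
    using X Pi y by (simp_all add: C_def d_def)
  note Si_C = Si_left[folded C_def] Si_right[folded C_def]
  note null_space = null_space_solution_solves[OF H N C Si HN ker_H Si_C]
    null_space_solution_unique[OF H N C Si HN ker_H Si_C]
    null_space_solution_eq[OF H N C Si HN ker_H Si_C]
  have bhat: "bhat = N * Si * N\<^sup>T *\<^sub>v d + (1\<^sub>m K - N * Si * N\<^sup>T * C) *\<^sub>v \<beta>s"
    and rhs: "N\<^sup>T * X\<^sup>T * Pi *\<^sub>v y = N\<^sup>T *\<^sub>v d"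
    using N Si X Pi y by (simp_all add: bhat_def C_def d_def mat_dims_simps)
  show "H *\<^sub>v bhat = H *\<^sub>v \<beta>" and NC_bhat: "N\<^sup>T * (X\<^sup>T * Pi * X) *\<^sub>v bhat = N\<^sup>T * X\<^sup>T * Pi *\<^sub>v y"
    using null_space(1,2)[OF \<beta>s d] H_\<beta>s by (simp_all add: bhat rhs C_def)
  have bhat_carrier: "bhat \<in> carrier_vec K"
    using carrier_matD[OF N] by (intro carrier_vecI) (simp add: bhat)
  show "b = bhat" if "b \<in> carrier_vec K" "H *\<^sub>v b = H *\<^sub>v \<beta>"
      "N\<^sup>T * (X\<^sup>T * Pi * X) *\<^sub>v b = N\<^sup>T * X\<^sup>T * Pi *\<^sub>v y" for b
    using null_space(3)[OF that(1) bhat_carrier] that \<open>H *\<^sub>v bhat = H *\<^sub>v \<beta>\<close> NC_bhat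
    by (simp add: C_def)
  have "bhat = \<beta> + N * Si * N\<^sup>T *\<^sub>v (d - C *\<^sub>v \<beta>)"
    using null_space(4)[OF \<beta> \<beta>s d H_\<beta>s] by (simp add: bhat)
  also have "d - C *\<^sub>v \<beta> = X\<^sup>T * Pi *\<^sub>v (y - X *\<^sub>v \<beta>)"
    using X Pi y \<beta> by (simp add: d_def C_def mult_minus_distrib_mat_vec mat_dims_simps)
  finally show "bhat = \<beta> + N * Si * N\<^sup>T * X\<^sup>T * Pi *\<^sub>v (y - X *\<^sub>v \<beta>)"
    using N Si X Pi y \<beta> by (simp add: mat_dims_simps)
qed

lemma restricted_gls_moments:
  fixes X N Si Pi \<Omega> :: "real mat" and \<beta> :: "real vec" and y Z :: "'w \<Rightarrow> real vec"
  assumes P: "prob_space P" and X: "X \<in> carrier_mat T K" and N: "N \<in> carrier_mat K k"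
    and Si: "Si \<in> carrier_mat k k" and Pi: "Pi \<in> carrier_mat T T" and \<Omega>: "\<Omega> \<in> carrier_mat T T"
    and \<beta>: "\<beta> \<in> carrier_vec K"
    and Pi_sym: "Pi\<^sup>T = Pi" and Pi_\<Omega>_Pi: "Pi * \<Omega> * Pi = Pi" and Si_sym: "Si\<^sup>T = Si"
    and Si_left: "Si * (N\<^sup>T * (X\<^sup>T * Pi * X) * N) = 1\<^sub>m k"
    and y: "\<forall>\<omega> \<in> space P. y \<omega> \<in> carrier_vec T"
    and int_y: "\<forall>l<T. integrable P (\<lambda>\<omega>. y \<omega> $ l)"
    and int_uu: "\<forall>l<T. \<forall>m<T. integrable P (\<lambda>\<omega>. (y \<omega> - X *\<^sub>v \<beta>) $ l * (y \<omega> - X *\<^sub>v \<beta>) $ m)"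
    and Eu: "vexp P (\<lambda>\<omega>. y \<omega> - X *\<^sub>v \<beta>) T = 0\<^sub>v T"
    and Euu: "vsecond P (\<lambda>\<omega>. y \<omega> - X *\<^sub>v \<beta>) T = \<sigma>2 \<cdot>\<^sub>m \<Omega>"
    and Z: "\<forall>\<omega> \<in> space P. Z \<omega> = \<beta> + N * Si * N\<^sup>T * X\<^sup>T * Pi *\<^sub>v (y \<omega> - X *\<^sub>v \<beta>)"
  shows "vexp P Z K = \<beta>" and "vcov P Z K = \<sigma>2 \<cdot>\<^sub>m (N * Si * N\<^sup>T)"
proof -
  define G where "G = N * Si * N\<^sup>T * X\<^sup>T * Pi"
  have G: "G \<in> carrier_mat K T"
    using N Pi by (intro carrier_matI) (simp_all add: G_def)
  have u: "\<forall>\<omega> \<in> space P. y \<omega> - X *\<^sub>v \<beta> \<in> carrier_vec T"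
    using y X \<beta> by auto
  have int_u: "\<forall>l<T. integrable P (\<lambda>\<omega>. (y \<omega> - X *\<^sub>v \<beta>) $ l)"
    using int_y X \<beta> P
    by (simp add: Bochner_Integration.integrable_diff finite_measure.integrable_const prob_space.finite_measure)
  show "vexp P Z K = \<beta>"
    using vexp_affine[OF P G \<beta> u int_u] Z Eu G \<beta> by (simp add: G_def)
  have "G * \<Omega> * G\<^sup>T = N * Si * N\<^sup>T"
    unfolding G_def by (rule gls_sandwich_eq[OF X N Si Pi \<Omega> Pi_sym Pi_\<Omega>_Pi Si_sym Si_left])
  then have "G * vsecond P (\<lambda>\<omega>. y \<omega> - X *\<^sub>v \<beta>) T * G\<^sup>T = \<sigma>2 \<cdot>\<^sub>m (N * Si * N\<^sup>T)"
    using mult_smult_distrib[OF G \<Omega>]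
      mult_smult_assoc_mat[OF mult_carrier_mat[OF G \<Omega>] transpose_carrier_mat[THEN iffD2, OF G]]
    by (simp only: Euu)
  then show "vcov P Z K = \<sigma>2 \<cdot>\<^sub>m (N * Si * N\<^sup>T)"
    using vcov_affine[OF P G \<beta> u int_u int_uu Eu] Z by (simp add: G_def)
qed

lemma restricted_gls_estimator:
  fixes H N X Pi \<Omega> Si :: "real mat" and \<beta> \<beta>s :: "real vec" and y :: "'w \<Rightarrow> real vec"
  assumes H: "H \<in> carrier_mat m K" and N: "N \<in> carrier_mat K k" and X: "X \<in> carrier_mat T K"
    and Pi: "Pi \<in> carrier_mat T T" and \<Omega>: "\<Omega> \<in> carrier_mat T T"
    and Pi_sym: "Pi\<^sup>T = Pi" and Pi_\<Omega>_Pi: "Pi * \<Omega> * Pi = Pi"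
    and HN: "H * N = 0\<^sub>m m k"
    and ker_H: "\<forall>v \<in> carrier_vec K. H *\<^sub>v v = 0\<^sub>v m \<longrightarrow> (\<exists>c \<in> carrier_vec k. v = N *\<^sub>v c)"
    and Si: "Si \<in> carrier_mat k k" and S_Si: "N\<^sup>T * (X\<^sup>T * Pi * X) * N * Si = 1\<^sub>m k"
    and Si_S: "Si * (N\<^sup>T * (X\<^sup>T * Pi * X) * N) = 1\<^sub>m k"
    and \<beta>: "\<beta> \<in> carrier_vec K" and \<beta>s: "\<beta>s \<in> carrier_vec K" and H_\<beta>s: "H *\<^sub>v \<beta>s = H *\<^sub>v \<beta>"
    and P: "prob_space P" and y: "\<forall>\<omega> \<in> space P. y \<omega> \<in> carrier_vec T"
    and int_y: "\<forall>l<T. integrable P (\<lambda>\<omega>. y \<omega> $ l)"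
    and int_uu: "\<forall>l<T. \<forall>m<T. integrable P (\<lambda>\<omega>. (y \<omega> - X *\<^sub>v \<beta>) $ l * (y \<omega> - X *\<^sub>v \<beta>) $ m)"
    and Eu: "vexp P (\<lambda>\<omega>. y \<omega> - X *\<^sub>v \<beta>) T = 0\<^sub>v T"
    and Euu: "vsecond P (\<lambda>\<omega>. y \<omega> - X *\<^sub>v \<beta>) T = \<sigma>2 \<cdot>\<^sub>m \<Omega>"
  shows "let bhat = (\<lambda>\<omega>. N * Si * N\<^sup>T * X\<^sup>T * Pi *\<^sub>v y \<omega> + (1\<^sub>m K - N * Si * N\<^sup>T * (X\<^sup>T * Pi * X)) *\<^sub>v \<beta>s)
    in (\<forall>\<omega> \<in> space P.
          H *\<^sub>v bhat \<omega> = H *\<^sub>v \<beta> \<and> N\<^sup>T * (X\<^sup>T * Pi * X) *\<^sub>v bhat \<omega> = N\<^sup>T * X\<^sup>T * Pi *\<^sub>v y \<omega> \<and>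
          (\<forall>b \<in> carrier_vec K. H *\<^sub>v b = H *\<^sub>v \<beta> \<and> N\<^sup>T * (X\<^sup>T * Pi * X) *\<^sub>v b = N\<^sup>T * X\<^sup>T * Pi *\<^sub>v y \<omega>
              \<longrightarrow> b = bhat \<omega>))
       \<and> vexp P bhat K = \<beta>
       \<and> vcov P bhat K = \<sigma>2 \<cdot>\<^sub>m (N * Si * N\<^sup>T)"
proof -
  have "(N\<^sup>T * (X\<^sup>T * Pi * X) * N)\<^sup>T = N\<^sup>T * (X\<^sup>T * Pi * X) * N"
    using N X Pi Pi_sym by (simp add: mat_dims_simps)
  moreover have "N\<^sup>T * (X\<^sup>T * Pi * X) * N \<in> carrier_mat k k"
    using N by (intro carrier_matI) simp_all
  ultimately have Si_sym: "Si\<^sup>T = Si"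
    using inverse_mat_symmetric[OF _ Si _ Si_S S_Si] by blast
  note normal_eq = restricted_normal_equations_solution[OF H N X Pi Si HN ker_H Si_S S_Si \<beta> \<beta>s H_\<beta>s]
  define bhat where "bhat = (\<lambda>\<omega>. N * Si * N\<^sup>T * X\<^sup>T * Pi *\<^sub>v y \<omega>
    + (1\<^sub>m K - N * Si * N\<^sup>T * (X\<^sup>T * Pi * X)) *\<^sub>v \<beta>s)"
  have y_\<omega>: "y \<omega> \<in> carrier_vec T" if "\<omega> \<in> space P" for \<omega>
    using y that by blast
  have solves: "H *\<^sub>v bhat \<omega> = H *\<^sub>v \<beta>" "N\<^sup>T * (X\<^sup>T * Pi * X) *\<^sub>v bhat \<omega> = N\<^sup>T * X\<^sup>T * Pi *\<^sub>v y \<omega>"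
    if "\<omega> \<in> space P" for \<omega>
    using normal_eq(1,2)[OF y_\<omega>[OF that]] by (simp_all add: bhat_def)
  have unique: "b = bhat \<omega>" if "\<omega> \<in> space P" "b \<in> carrier_vec K" "H *\<^sub>v b = H *\<^sub>v \<beta>"
    "N\<^sup>T * (X\<^sup>T * Pi * X) *\<^sub>v b = N\<^sup>T * X\<^sup>T * Pi *\<^sub>v y \<omega>" for \<omega> b
    using normal_eq(3)[OF y_\<omega>[OF that(1)] that(2-4)] by (simp add: bhat_def)
  have "\<forall>\<omega> \<in> space P. bhat \<omega> = \<beta> + N * Si * N\<^sup>T * X\<^sup>T * Pi *\<^sub>v (y \<omega> - X *\<^sub>v \<beta>)"
    using normal_eq(4) y by (simp add: bhat_def)
  note moments = restricted_gls_moments[OF P X N Si Pi \<Omega> \<beta> Pi_sym Pi_\<Omega>_Pi Si_sym Si_S y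
      int_y int_uu Eu Euu this]
  show ?thesis
    unfolding Let_def bhat_def[symmetric] using solves unique moments by blast
qed

theorem theorem3:
  fixes T K q M :: nat
    and X R F \<Lambda> \<Omega> A N :: "real mat"
    and \<beta> r \<beta>s :: "real vec"
    and \<sigma>2 :: real
    and P :: "'w measure"
    and y :: "'w \<Rightarrow> real vec"
  defines "u \<equiv> (\<lambda>\<omega>. y \<omega> - X *\<^sub>v \<beta>)"
    and "H \<equiv> R @\<^sub>r (A\<^sup>T * X)"
    and "h \<equiv> r @\<^sub>v (A\<^sup>T * X *\<^sub>v \<beta>)"
    and "S \<equiv> N\<^sup>T * (X\<^sup>T * eig_pinv F \<Lambda> * X) * N"
  assumes "0 < K" and "K < T"
    and X: "X \<in> carrier_mat T K"
    and R: "R \<in> carrier_mat q K" and r: "r \<in> carrier_vec q"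
    and \<beta>: "\<beta> \<in> carrier_vec K" and R\<beta>: "R *\<^sub>v \<beta> = r"
    and sig: "0 < \<sigma>2"
    and \<Omega>: "\<Omega> \<in> carrier_mat T T" and "sym_psd \<Omega>" and "mtrace \<Omega> = real T" and "rk \<Omega> = M"
    and F: "F \<in> carrier_mat T M" and "F\<^sup>T * F = 1\<^sub>m M"
    and \<Lambda>: "\<Lambda> \<in> carrier_mat M M" and "diagonal_mat \<Lambda>" and "\<forall>i<M. 0 < \<Lambda> $$ (i, i)"
    and "\<Omega> = F * \<Lambda> * F\<^sup>T"
    and A: "A \<in> carrier_mat T (T - M)" and "A\<^sup>T * A = 1\<^sub>m (T - M)" and "\<Omega> * A = 0\<^sub>m T (T - M)"
    and N: "N \<in> carrier_mat K (K - rk H)" and "N\<^sup>T * N = 1\<^sub>m (K - rk H)"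
    and "H * N = 0\<^sub>m (dim_row H) (K - rk H)"
    and "\<forall>v \<in> carrier_vec K. H *\<^sub>v v = 0\<^sub>v (dim_row H) \<longrightarrow>
           (\<exists>c \<in> carrier_vec (K - rk H). v = N *\<^sub>v c)"
    and i: "rk R = rk (append_col R r)"
    and ii: "rk (R @\<^sub>r X) = K"
    and iii: "rk H = rk (append_col H h)"
    and \<beta>s: "\<beta>s \<in> carrier_vec K" and "H *\<^sub>v \<beta>s = h"
    and P: "prob_space P"
    and y: "\<forall>\<omega> \<in> space P. y \<omega> \<in> carrier_vec T"
    and "\<forall>i<T. integrable P (\<lambda>\<omega>. y \<omega> $ i)"
    and "\<forall>i<T. \<forall>j<T. integrable P (\<lambda>\<omega>. u \<omega> $ i * u \<omega> $ j)"
    and Eu: "vexp P u T = 0\<^sub>v T"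
    and Euu: "vsecond P u T = \<sigma>2 \<cdot>\<^sub>m \<Omega>"
  shows "invertible_mat S \<and>
    (\<forall>Si. Si \<in> carrier_mat (K - rk H) (K - rk H) \<and> S * Si = 1\<^sub>m (K - rk H)
            \<and> Si * S = 1\<^sub>m (K - rk H) \<longrightarrow>
      (let bhat = (\<lambda>\<omega>. N * Si * N\<^sup>T * X\<^sup>T * eig_pinv F \<Lambda> *\<^sub>v y \<omega>
                        + (1\<^sub>m K - N * Si * N\<^sup>T * (X\<^sup>T * eig_pinv F \<Lambda> * X)) *\<^sub>v \<beta>s)
       in (\<forall>\<omega> \<in> space P.
             H *\<^sub>v bhat \<omega> = h \<and> N\<^sup>T * (X\<^sup>T * eig_pinv F \<Lambda> * X) *\<^sub>v bhat \<omega> = N\<^sup>T * X\<^sup>T * eig_pinv F \<Lambda> *\<^sub>v y \<omega> \<and>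
             (\<forall>b \<in> carrier_vec K. H *\<^sub>v b = h \<and> N\<^sup>T * (X\<^sup>T * eig_pinv F \<Lambda> * X) *\<^sub>v b = N\<^sup>T * X\<^sup>T * eig_pinv F \<Lambda> *\<^sub>v y \<omega>
                 \<longrightarrow> b = bhat \<omega>))
          \<and> vexp P bhat K = \<beta>
          \<and> vcov P bhat K = \<sigma>2 \<cdot>\<^sub>m (N * Si * N\<^sup>T)))"
proof -
  have H: "H \<in> carrier_mat (q + (T - M)) K"
    using R A X by (simp add: H_def)
  have Pi: "eig_pinv F \<Lambda> \<in> carrier_mat T T"
    using F \<Lambda> by simp
  have M_le_T: "M \<le> T"
    using vec_space.rank_le_nc[OF \<Omega>] \<Omega> \<open>rk \<Omega> = M\<close> by (simp add: rk_def)
  have FA: "F\<^sup>T * A = 0\<^sub>m M (T - M)"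
    using spectral_factor_orth_kernel[OF F \<Lambda> \<open>F\<^sup>T * F = 1\<^sub>m M\<close> \<open>diagonal_mat \<Lambda>\<close> \<open>\<forall>i<M. 0 < \<Lambda> $$ (i, i)\<close> A]
      \<open>\<Omega> = F * \<Lambda> * F\<^sup>T\<close> \<open>\<Omega> * A = 0\<^sub>m T (T - M)\<close> by simp
  have "(R @\<^sub>r (A\<^sup>T * X)) * N = 0\<^sub>m (q + (T - M)) (K - rk H)"
    using \<open>H * N = 0\<^sub>m (dim_row H) (K - rk H)\<close> H by (simp add: H_def)
  then have "invertible_mat S"
    unfolding S_def
    by (rule restricted_gls_normal_matrix_invertible[OF X R F \<Lambda> A N M_le_T \<open>F\<^sup>T * F = 1\<^sub>m M\<close>
          \<open>A\<^sup>T * A = 1\<^sub>m (T - M)\<close> FA \<open>diagonal_mat \<Lambda>\<close> \<open>\<forall>i<M. 0 < \<Lambda> $$ (i, i)\<close> ii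
          \<open>N\<^sup>T * N = 1\<^sub>m (K - rk H)\<close>])
  moreover have "eig_pinv F \<Lambda> * \<Omega> * eig_pinv F \<Lambda> = eig_pinv F \<Lambda>"
    using eig_pinv_reflexive[OF F \<Lambda> \<open>F\<^sup>T * F = 1\<^sub>m M\<close> \<open>diagonal_mat \<Lambda>\<close>]
      \<open>\<forall>i<M. 0 < \<Lambda> $$ (i, i)\<close> \<open>\<Omega> = F * \<Lambda> * F\<^sup>T\<close> by simp
  moreover have "h = H *\<^sub>v \<beta>"
    unfolding H_def h_def using mat_mult_append[of R q K "A\<^sup>T * X" "T - M" \<beta>] R A X \<beta> R\<beta> by simp
  ultimately show ?thesis
    unfolding S_def
    using restricted_gls_estimator[OF carrier_matI[of H "dim_row H" K] N X Pi \<Omega> transpose_eig_pinv[OF F \<Lambda>]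
        _ \<open>H * N = 0\<^sub>m (dim_row H) (K - rk H)\<close> \<open>\<forall>v \<in> carrier_vec K. H *\<^sub>v v = 0\<^sub>v (dim_row H) \<longrightarrow> _\<close>
        _ _ _ \<beta> \<beta>s _ P y \<open>\<forall>i<T. integrable P (\<lambda>\<omega>. y \<omega> $ i)\<close>
        \<open>\<forall>i<T. \<forall>j<T. integrable P (\<lambda>\<omega>. u \<omega> $ i * u \<omega> $ j)\<close>[unfolded u_def]
        Eu[unfolded u_def] Euu[unfolded u_def]]
      \<open>H *\<^sub>v \<beta>s = h\<close> H by simp
qed

end
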